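(* $$\sum_{k=1}^\infty\frac{26975k^2-17111k+2968}{k(-8)^k\binom{4k}k}=-297-120\log2.$$ *)

theory Defs
  imports Complex_Main
begin

end

theory Submission
  imports Defs "HOL-Analysis.Analysis"
begin

(* By the Beta integral, 1 / (k * binomial (4k) k) is the integral of x^(k-1) (1-x)^(3k) over [0,1],
   so the k-th summand is the integral of c(k) (-1/8)^k x^(k-1) (1-x)^(3k), where c is the quadratic
   numerator.  These integrands are bounded by a quadratic in k times 8^(-k), so sum and integral may
   be interchanged.  With z = -x(1-x)^3/8 the summed integrand is -(1-x)^3/8 times the power series
   sum c(k) z^(k-1), a rational function of z, hence of x, with denominator D(x)^3 where
   D(x) = 8 + x(1-x)^3 = (1 + x)(8 - 7x + 4x^2 - x^3).  Hermite reduction yields the antiderivative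
   Q/D^2 - 712 ln D - 120 ln(1 + x) with an explicit polynomial Q of degree 7, and its values at
   0 and 1 give -297 - 120 ln 2. *)

lemma has_integral_power_mult_one_minus_power:
  "((\<lambda>x. x ^ m * (1 - x) ^ n) has_integral fact m * fact n / fact (m + n + 1)) {0..(1::real)}"
proof -
  have "((\<lambda>x. x powr (real (Suc m) - 1) * (1 - x) powr (real (Suc n) - 1))
          has_integral Beta (real (Suc m)) (real (Suc n))) {0..1}"
    by (rule has_integral_Beta_real) auto
  moreover have "Beta (real (Suc m)) (real (Suc n)) = fact m * fact n / fact (m + n + 1)"
  proof -
    have Gamma: "Gamma (real (Suc k)) = fact k" for k
      using Gamma_fact[of k, where 'a = real] by (simp add: add.commute)
    have "real (Suc m) + real (Suc n) = real (Suc (m + n + 1))" by simp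
    then show ?thesis by (simp only: Beta_def Gamma)
  qed
  ultimately have "((\<lambda>x. x powr (real (Suc m) - 1) * (1 - x) powr (real (Suc n) - 1))
          has_integral fact m * fact n / fact (m + n + 1)) {0<..<1}"
    by (simp add: has_integral_Icc_iff_Ioo)
  then have "((\<lambda>x. x ^ m * (1 - x) ^ n) has_integral fact m * fact n / fact (m + n + 1))
      {0<..<(1::real)}"
    by (rule has_integral_eq[rotated]) (simp add: powr_realpow)
  then show ?thesis
    by (simp add: has_integral_Icc_iff_Ioo)
qed

lemma fact_mult_fact_div_fact_eq:
  "fact m * fact n / fact (m + n + 1) = 1 / (real (Suc m) * real ((m + n + 1) choose Suc m))"
proof -
  define C where "C = real ((m + n + 1) choose Suc m)"
  define F where "F = (fact (m + n + 1) :: real)"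
  have "fact (Suc m) * fact n * ((m + n + 1) choose Suc m) = fact (m + n + 1)"
    using binomial_fact_lemma[of "Suc m" "m + n + 1"] by simp
  then have "F = real (Suc m) * fact m * fact n * C"
    unfolding C_def F_def by (metis fact_Suc of_nat_fact of_nat_mult)
  then show ?thesis
    unfolding C_def[symmetric] F_def[symmetric] by simp
qed

lemma sums_Suc_squared_power:
  fixes z :: "'a :: {banach, real_normed_field}"
  assumes "norm z < 1"
  shows "(\<lambda>n. of_nat (Suc n) ^ 2 * z ^ n) sums ((1 + z) / (1 - z) ^ 3)"
proof -
  have "1 - z \<noteq> 0" using assms by auto
  have "(\<lambda>n. diffs (\<lambda>n. of_nat (Suc n)) n * z ^ n) sums (2 / (1 - z) ^ 3)"
  proof (rule termdiffs_sums_strong[where K = 1])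
    show "(\<lambda>n. of_nat (Suc n) * w ^ n) sums (1 / (1 - w) ^ 2)" if "norm w < 1" for w :: 'a
      using that by (rule geometric_deriv_sums)
    show "((\<lambda>w. 1 / (1 - w) ^ 2) has_field_derivative 2 / (1 - z) ^ 3) (at z)"
      using \<open>1 - z \<noteq> 0\<close> by (auto intro!: derivative_eq_intros simp: field_simps) algebra
  qed (use assms in auto)
  then have "(\<lambda>n. diffs (\<lambda>n. of_nat (Suc n)) n * z ^ n - of_nat (Suc n) * z ^ n)
               sums (2 / (1 - z) ^ 3 - 1 / (1 - z) ^ 2)"
    using geometric_deriv_sums[OF assms] by (rule sums_diff)
  moreover have "2 / (1 - z) ^ 3 - 1 / (1 - z) ^ 2 = (1 + z) / (1 - z) ^ 3"
    using \<open>1 - z \<noteq> 0\<close> by (simp add: field_simps) algebra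
  ultimately show ?thesis
    by (simp add: diffs_def algebra_simps power2_eq_square)
qed

lemma sums_integrals_Weierstrass:
  fixes f :: "nat \<Rightarrow> real \<Rightarrow> 'a :: banach"
  assumes cont: "\<And>n. continuous_on {a..b} (f n)"
    and integral: "\<And>n. (f n has_integral I n) {a..b}"
    and bound: "\<And>n x. x \<in> {a..b} \<Longrightarrow> norm (f n x) \<le> M n"
    and "summable M"
    and sums: "\<And>x. x \<in> {a..b} \<Longrightarrow> (\<lambda>n. f n x) sums g x"
    and "(g has_integral J) {a..b}"
  shows "I sums J"
proof -
  have "uniform_limit {a..b} (\<lambda>N x. \<Sum>n<N. f n x) (\<lambda>x. \<Sum>n. f n x) sequentially"
    using bound \<open>summable M\<close> by (rule Weierstrass_m_test)
  moreover have "continuous_on {a..b} (\<lambda>x. \<Sum>n<N. f n x)" for N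
    by (intro continuous_intros cont)
  ultimately obtain I' J' where
      I': "\<And>N. ((\<lambda>x. \<Sum>n<N. f n x) has_integral I' N) {a..b}"
    and J': "((\<lambda>x. \<Sum>n. f n x) has_integral J') {a..b}"
    and "I' \<longlonglongrightarrow> J'"
    by (rule uniform_limit_integral) auto
  have "I' = (\<lambda>N. \<Sum>n<N. I n)"
    using I' has_integral_sum[OF finite_lessThan integral] by (intro ext has_integral_unique)
  moreover have "((\<lambda>x. \<Sum>n. f n x) has_integral J) {a..b}"
    using \<open>(g has_integral J) {a..b}\<close> by (rule has_integral_eq[rotated]) (metis sums sums_unique)
  then have "J' = J"
    using J' by (rule has_integral_unique[rotated])
  ultimately show ?thesis
    using \<open>I' \<longlonglongrightarrow> J'\<close> by (simp add: sums_def)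
qed

definition summand_numer :: "nat \<Rightarrow> real" where
  "summand_numer k = 26975 * real k ^ 2 - 17111 * real k + 2968"

lemma summand_numer_power_series_sums:
  fixes z :: real
  assumes "norm z < 1"
  shows "(\<lambda>n. summand_numer (Suc n) * z ^ n) sums ((12832 + 38150 * z + 2968 * z ^ 2) / (1 - z) ^ 3)"
proof -
  have "(\<lambda>n. 26975 * (real (Suc n) ^ 2 * z ^ n) - 17111 * (real (Suc n) * z ^ n) + 2968 * z ^ n)
          sums (26975 * ((1 + z) / (1 - z) ^ 3) - 17111 * (1 / (1 - z) ^ 2) + 2968 * (1 / (1 - z)))"
    using assms
    by (intro sums_add sums_diff sums_mult sums_Suc_squared_power geometric_deriv_sums geometric_sums)
       auto
  moreover have "26975 * ((1 + z) / (1 - z) ^ 3) - 17111 * (1 / (1 - z) ^ 2) + 2968 * (1 / (1 - z))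
      = (12832 + 38150 * z + 2968 * z ^ 2) / (1 - z) ^ 3"
  proof -
    have "1 - z \<noteq> 0" using assms by auto
    then show ?thesis
      by (simp add: field_simps) algebra
  qed
  ultimately show ?thesis
    by (simp add: summand_numer_def algebra_simps)
qed

definition series_integrand :: "nat \<Rightarrow> real \<Rightarrow> real" where
  "series_integrand n x = summand_numer (Suc n) / (- 8) ^ Suc n * (x ^ n * (1 - x) ^ (3 * n + 3))"

lemma series_integrand_has_integral:
  "(series_integrand n has_integral
      summand_numer (Suc n) / (real (Suc n) * (- 8) ^ Suc n * real ((4 * Suc n) choose Suc n)))
   {0..1}"
proof -
  have "n + (3 * n + 3) + 1 = 4 * Suc n" by simp
  then have "((\<lambda>x. x ^ n * (1 - x) ^ (3 * n + 3)) has_integral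
          1 / (real (Suc n) * real ((4 * Suc n) choose Suc n))) {0..1}"
    using has_integral_power_mult_one_minus_power[of n "3 * n + 3"]
    unfolding fact_mult_fact_div_fact_eq by simp
  then show ?thesis
    unfolding series_integrand_def[abs_def]
    by (rule has_integral_eq_rhs[OF has_integral_mult_right]) (simp add: ac_simps)
qed

lemma abs_series_integrand_le:
  assumes "x \<in> {0..1}"
  shows "\<bar>series_integrand n x\<bar> \<le> 47054 / 8 * (real (Suc n) ^ 2 * (1 / 8) ^ n)"
proof -
  have numer_le: "\<bar>summand_numer (Suc n)\<bar> \<le> 47054 * real (Suc n) ^ 2"
  proof -
    have "1 \<le> real (Suc n)" "real (Suc n) \<le> real (Suc n) ^ 2"
      by (simp_all add: power2_eq_square)
    then show ?thesis unfolding summand_numer_def by (auto simp: abs_le_iff)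
  qed
  have power_le: "\<bar>x ^ n * (1 - x) ^ (3 * n + 3)\<bar> \<le> 1"
    using assms by (auto simp: abs_mult intro!: mult_le_one power_le_one)
  have "\<bar>series_integrand n x\<bar>
      = \<bar>summand_numer (Suc n)\<bar> / 8 ^ Suc n * \<bar>x ^ n * (1 - x) ^ (3 * n + 3)\<bar>"
    unfolding series_integrand_def by (simp add: abs_mult abs_divide power_abs)
  also have "\<dots> \<le> 47054 * real (Suc n) ^ 2 / 8 ^ Suc n * 1"
    by (intro mult_mono divide_right_mono numer_le power_le) auto
  also have "\<dots> = 47054 / 8 * (real (Suc n) ^ 2 * (1 / 8) ^ n)"
    by (simp add: power_one_over)
  finally show ?thesis .
qed

definition denom :: "real \<Rightarrow> real" where
  "denom x = 8 + x * (1 - x) ^ 3"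

definition integrand_numer :: "real \<Rightarrow> real" where
  "integrand_numer x =
     - ((1 - x) ^ 3 * (821248 - 305200 * (x * (1 - x) ^ 3) + 2968 * (x * (1 - x) ^ 3) ^ 2))"

definition integrand :: "real \<Rightarrow> real" where
  "integrand x = integrand_numer x / denom x ^ 3"

lemma denom_ge_8: "0 \<le> x \<Longrightarrow> x \<le> 1 \<Longrightarrow> 8 \<le> denom x"
  unfolding denom_def by simp

lemma series_integrand_sums:
  assumes "x \<in> {0..1}"
  shows "(\<lambda>n. series_integrand n x) sums integrand x"
proof -
  define z where "z = x * (1 - x) ^ 3 / - 8"
  have "0 \<le> x * (1 - x) ^ 3" "x * (1 - x) ^ 3 \<le> 1"
    using assms by (auto intro!: mult_le_one power_le_one)
  then have "norm z < 1" by (simp add: z_def)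
  have "series_integrand n x = (1 - x) ^ 3 / - 8 * (summand_numer (Suc n) * z ^ n)" for n
  proof -
    have "(1 - x) ^ (3 * n + 3) = ((1 - x) ^ 3) ^ n * (1 - x) ^ 3"
      by (simp only: power_add power_mult)
    then show ?thesis
      unfolding series_integrand_def z_def power_divide power_mult_distrib by simp
  qed
  moreover have "(\<lambda>n. (1 - x) ^ 3 / - 8 * (summand_numer (Suc n) * z ^ n))
      sums ((1 - x) ^ 3 / - 8 * ((12832 + 38150 * z + 2968 * z ^ 2) / (1 - z) ^ 3))"
    using \<open>norm z < 1\<close> by (intro sums_mult summand_numer_power_series_sums)
  ultimately have "(\<lambda>n. series_integrand n x)
      sums ((1 - x) ^ 3 / - 8 * ((12832 + 38150 * z + 2968 * z ^ 2) / (1 - z) ^ 3))"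
    by simp
  moreover have "(1 - x) ^ 3 / - 8 * ((12832 + 38150 * z + 2968 * z ^ 2) / (1 - z) ^ 3) = integrand x"
  proof -
    have denom: "1 - z = denom x / 8"
      by (simp add: z_def denom_def)
    have "denom x \<noteq> 0"
      using denom_ge_8[of x] assms by force
    then show ?thesis
      unfolding denom unfolding integrand_def integrand_numer_def z_def
      by (simp add: field_simps power2_eq_square)
  qed
  ultimately show ?thesis by simp
qed

definition denom_cofactor :: "real \<Rightarrow> real" where
  "denom_cofactor x = 8 - 7 * x + 4 * x ^ 2 - x ^ 3"

definition denom_deriv :: "real \<Rightarrow> real" where
  "denom_deriv x = 1 - 6 * x + 9 * x ^ 2 - 4 * x ^ 3"

definition rational_numer :: "real \<Rightarrow> real" where
  "rational_numer x = - 259520 - 154160 * x + 339288 * x ^ 2 - 304224 * x ^ 3 + 115280 * x ^ 4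
     - 24144 * x ^ 5 + 10968 * x ^ 6 - 2016 * x ^ 7"

definition rational_numer_deriv :: "real \<Rightarrow> real" where
  "rational_numer_deriv x = - 154160 + 678576 * x - 912672 * x ^ 2 + 461120 * x ^ 3
     - 120720 * x ^ 4 + 65808 * x ^ 5 - 14112 * x ^ 6"

definition antiderivative :: "real \<Rightarrow> real" where
  "antiderivative x = rational_numer x / denom x ^ 2 - 712 * ln (denom x) - 120 * ln (1 + x)"

lemma denom_eq_mult_cofactor: "denom x = (1 + x) * denom_cofactor x"
  unfolding denom_def denom_cofactor_def by algebra

lemma denom_has_derivative: "(denom has_real_derivative denom_deriv x) (at x within S)"
  unfolding denom_def[abs_def] denom_deriv_def
  by (auto intro!: derivative_eq_intros simp: algebra_simps power2_eq_square power3_eq_cube)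

lemma rational_numer_has_derivative:
  "(rational_numer has_real_derivative rational_numer_deriv x) (at x within S)"
  unfolding rational_numer_def[abs_def] rational_numer_deriv_def
  by (auto intro!: derivative_eq_intros simp: algebra_simps)

(* The identity antiderivative' = integrand with the common denominator denom^3 cleared,
   using 1 / (1 + x) = denom_cofactor / denom. *)
lemma integrand_numer_eq:
  "integrand_numer x =
     rational_numer_deriv x * denom x - 2 * rational_numer x * denom_deriv x
     - (712 * denom_deriv x + 120 * denom_cofactor x) * denom x ^ 2"
  unfolding integrand_numer_def rational_numer_deriv_def denom_def rational_numer_def
    denom_deriv_def denom_cofactor_def
  by algebra

lemma antiderivative_has_derivative:
  assumes "0 \<le> x" "x \<le> 1"
  shows "(antiderivative has_real_derivative integrand x) (at x within S)"
proof -
  have "8 \<le> denom x" using denom_ge_8 assms by blast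
  have "0 < 1 + x" using assms by simp
  have "(antiderivative has_real_derivative
      (rational_numer_deriv x * denom x ^ 2 - rational_numer x * (2 * denom_deriv x * denom x))
        / (denom x ^ 2 * denom x ^ 2)
      - 712 * (denom_deriv x / denom x) - 120 * (1 / (1 + x))) (at x within S)"
    (is "(_ has_real_derivative ?derivative) _")
    unfolding antiderivative_def[abs_def] using \<open>8 \<le> denom x\<close> \<open>0 < 1 + x\<close>
    by (auto intro!: derivative_eq_intros rational_numer_has_derivative denom_has_derivative
        simp: mult_ac)
  moreover have "?derivative = integrand x"
  proof -
    have cofactor: "1 / (1 + x) = denom_cofactor x / denom x"
      using denom_eq_mult_cofactor[of x] \<open>0 < 1 + x\<close> \<open>8 \<le> denom x\<close> by (simp add: field_simps)
    show ?thesis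
      unfolding cofactor integrand_def integrand_numer_eq
      using \<open>8 \<le> denom x\<close> by (simp add: field_simps power2_eq_square power3_eq_cube)
  qed
  ultimately show ?thesis by simp
qed

lemma integrand_has_integral: "(integrand has_integral - 297 - 120 * ln 2) {0..1}"
proof -
  have "(integrand has_integral antiderivative 1 - antiderivative 0) {0..1}"
    by (rule fundamental_theorem_of_calculus)
       (auto simp: has_real_derivative_iff_has_vector_derivative[symmetric]
             intro!: antiderivative_has_derivative)
  moreover have "antiderivative 1 - antiderivative 0 = - 297 - 120 * ln 2"
    by (simp add: antiderivative_def rational_numer_def denom_def)
  ultimately show ?thesis by simp
qed

theorem lemma3p2:
  shows "(\<lambda>n. let k = n + 1 in
            (26975 * (real k)^2 - 17111 * real k + 2968)
            / (real k * (-8) ^ k * real ((4 * k) choose k)))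
         sums (-297 - 120 * ln 2)"
proof -
  have "(\<lambda>n. summand_numer (Suc n) / (real (Suc n) * (- 8) ^ Suc n * real ((4 * Suc n) choose Suc n)))
          sums (- 297 - 120 * ln 2)"
  proof (rule sums_integrals_Weierstrass[where f = series_integrand and g = integrand
        and M = "\<lambda>n. 47054 / 8 * (real (Suc n) ^ 2 * (1 / 8) ^ n)"])
    show "continuous_on {0..1} (series_integrand n)" for n
      unfolding series_integrand_def by (intro continuous_intros)
    show "summable (\<lambda>n. 47054 / 8 * (real (Suc n) ^ 2 * (1 / 8) ^ n :: real))"
      by (intro summable_mult sums_summable[OF sums_Suc_squared_power]) simp
  qed (use series_integrand_has_integral abs_series_integrand_le series_integrand_sums
           integrand_has_integral in auto)
  then show ?thesis
    by (simp add: summand_numer_def Let_def)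
qed

end
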